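(* Let $\{a_j\}\subset\mathbb{C}$ be a sequence of (not necessarily distinct) points in the open upper half plane, with $|a_1|\le|a_2|\le\cdots$, and suppose that for some constants $C_0$ and $\rho$, $$n(r)=\#\{j: |a_j|\le r\}\le C_0 r^\rho\quad\text{when } r\ge 1.$$ Suppose $\rho>0$ is not an integer, let $p$ be the greatest integer less than $\rho$, and set $$f(z)=\prod_{n=1}^\infty\frac{E_p(z/\overline{a_n})}{E_p(z/a_n)}.$$ Then for $x\in\mathbb{R}$, $$\left|\int_0^x\frac{f'(t)}{f(t)}\,dt\right|=O(|x|^\rho)\quad\text{as } |x|\to\infty.$$
   Context: The canonical factors are $E_0(z)=1-z$ and, for $p\in\mathbb{N}$, $E_p(z)=(1-z)\exp\!\big(z+z^2/2+\cdots+z^p/p\big)$. *)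

theory Defs
  imports "HOL-Complex_Analysis.Complex_Analysis" "HOL-Library.Landau_Symbols"
begin

text \<open>The canonical factor E_p is the library's weierstrass_factor p:
  (1 - z) * exp (sum_{k=1..p} z^k / k).\<close>

definition oint0 :: "(real \<Rightarrow> complex) \<Rightarrow> real \<Rightarrow> complex" where
  "oint0 g x = (if 0 \<le> x then integral {0..x} g else - integral {x..0} g)"

end

theory Submission
  imports Defs
begin

text \<open>
  Let L(w) = Ln(1 - w) + w + w^2/2 + ... + w^p/p, a logarithm of E_p(w) off the cut [1, \<infinity>).
  On a neighbourhood of the real axis f = exp g with g(z) = \<Sum>n (L(z/conj a_n) - L(z/a_n)), so the
  integral of f'/f from 0 to x is g(x). For real x the two logarithms in the n-th term are complex
  conjugates, so the term is -2i Im L(x/a_n), which is O(min(|x/a_n|^p, |x/a_n|^(p+1))) uniformly in n.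
  The counting hypothesis gives |a_n| \<ge> c n^(1/\<rho>). Splitting the resulting series at
  n \<approx> (|x|/c)^\<rho> and comparing the two parts with the integrals of t^(-p/\<rho>) near 0 and of
  t^(-(p+1)/\<rho>) near \<infinity>, which converge precisely because p < \<rho> < p + 1, bounds it by
  a constant times |x|^\<rho>.
\<close>

section \<open>A logarithm of the canonical factor\<close>

definition ln_weierstrass_factor :: "nat \<Rightarrow> complex \<Rightarrow> complex" where
  "ln_weierstrass_factor p w = Ln (1 - w) + (\<Sum>k=1..p. w ^ k / of_nat k)"

lemma ln_weierstrass_factor_0 [simp]: "ln_weierstrass_factor p 0 = 0"
  by (simp add: ln_weierstrass_factor_def power_0_left)

lemma exp_ln_weierstrass_factor: "w \<noteq> 1 \<Longrightarrow> exp (ln_weierstrass_factor p w) = weierstrass_factor p w"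
  by (simp add: ln_weierstrass_factor_def weierstrass_factor_def exp_add)

lemma ln_weierstrass_factor_cnj:
  "1 - w \<notin> \<real>\<^sub>\<le>\<^sub>0 \<Longrightarrow> ln_weierstrass_factor p (cnj w) = cnj (ln_weierstrass_factor p w)"
  by (simp add: ln_weierstrass_factor_def cnj_Ln)

lemma has_field_derivative_ln_weierstrass_factor:
  assumes "1 - w \<notin> \<real>\<^sub>\<le>\<^sub>0"
  shows "(ln_weierstrass_factor p has_field_derivative - (w ^ p) / (1 - w)) (at w)"
proof -
  have "1 - w \<noteq> 0" using assms by auto
  moreover have "(1 - w) * (\<Sum>k<p. w ^ k) = 1 - w ^ p"
    using power_diff_1_eq[of w p] by (simp add: algebra_simps)
  ultimately have "(\<Sum>k<p. w ^ k) = (1 - w ^ p) / (1 - w)"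
    by (simp add: eq_divide_eq mult.commute)
  hence geom: "inverse (1 - w) * (-1) + (\<Sum>k<p. w ^ k) = - (w ^ p) / (1 - w)"
    using \<open>1 - w \<noteq> 0\<close> by (simp add: inverse_eq_divide add_divide_distrib [symmetric] diff_divide_distrib)
  have "((\<lambda>w. 1 - w) has_field_derivative -1) (at w)"
    by (auto intro!: derivative_eq_intros)
  from DERIV_chain2[OF has_field_derivative_Ln[OF assms] this]
  have "((\<lambda>w. Ln (1 - w)) has_field_derivative inverse (1 - w) * (-1)) (at w)" .
  moreover have "((\<lambda>w. \<Sum>k=1..p. w ^ k / of_nat k) has_field_derivative (\<Sum>k<p. w ^ k)) (at w)"
  proof -
    have "((\<lambda>w. \<Sum>k=1..p. w ^ k / of_nat k) has_field_derivative
            (\<Sum>k=1..p. of_nat k * w ^ (k - 1) / of_nat k)) (at w)"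
      by (auto intro!: derivative_eq_intros)
    also have "(\<Sum>k=1..p. of_nat k * w ^ (k - 1) / of_nat k) = (\<Sum>k<p. w ^ k)"
      unfolding One_nat_def sum.atLeast1_atMost_eq by (simp del: of_nat_Suc)
    finally show ?thesis .
  qed
  ultimately have "(ln_weierstrass_factor p has_field_derivative
                     inverse (1 - w) * (-1) + (\<Sum>k<p. w ^ k)) (at w)"
    unfolding ln_weierstrass_factor_def [abs_def] by (rule DERIV_add)
  thus ?thesis by (simp only: geom)
qed

lemma one_minus_notin_nonpos_Reals: "norm (w :: complex) \<le> 1 / 2 \<Longrightarrow> 1 - w \<notin> \<real>\<^sub>\<le>\<^sub>0"
  using complex_Re_le_cmod[of w] by (simp add: complex_nonpos_Reals_iff)

lemma norm_ln_weierstrass_factor_le: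
  assumes "norm w \<le> 1 / 2"
  shows "norm (ln_weierstrass_factor p w) \<le> 2 * norm w ^ Suc p"
proof -
  have "norm (ln_weierstrass_factor p w - ln_weierstrass_factor p 0) \<le> (2 * norm w ^ p) * norm (w - 0)"
  proof (rule field_differentiable_bound[where S = "cball 0 (norm w)"])
    fix u :: complex assume "u \<in> cball 0 (norm w)"
    hence u: "norm u \<le> norm w" by simp
    hence "1 - u \<notin> \<real>\<^sub>\<le>\<^sub>0" using assms by (intro one_minus_notin_nonpos_Reals) simp
    thus "(ln_weierstrass_factor p has_field_derivative - (u ^ p) / (1 - u)) (at u within cball 0 (norm w))"
      by (rule has_field_derivative_at_within[OF has_field_derivative_ln_weierstrass_factor])
    have "1 - norm u \<le> norm (1 - u)" using norm_triangle_ineq2[of 1 u] by simp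
    hence "1 / 2 \<le> norm (1 - u)" using u assms by linarith
    with u have "norm u ^ p / norm (1 - u) \<le> norm w ^ p / (1 / 2)"
      by (intro frac_le power_mono) auto
    thus "norm (- (u ^ p) / (1 - u)) \<le> 2 * norm w ^ p"
      by (simp add: norm_divide norm_power)
  qed auto
  thus ?thesis by (simp add: mult.commute mult.left_commute)
qed

lemma abs_Im_ln_weierstrass_factor_le:
  assumes "w \<noteq> 1"
  shows "\<bar>Im (ln_weierstrass_factor p w)\<bar> \<le> pi + (\<Sum>k=1..p. norm w ^ k)"
proof -
  have "\<bar>Im (Ln (1 - w))\<bar> \<le> pi"
    using mpi_less_Im_Ln[of "1 - w"] Im_Ln_le_pi[of "1 - w"] assms by auto
  moreover have "\<bar>Im (\<Sum>k=1..p. w ^ k / of_nat k)\<bar> \<le> (\<Sum>k=1..p. norm w ^ k)"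
  proof -
    have "\<bar>Im (\<Sum>k=1..p. w ^ k / of_nat k)\<bar> \<le> (\<Sum>k=1..p. norm (w ^ k / of_nat k))"
      using abs_Im_le_cmod norm_sum order_trans by blast
    also have "\<dots> \<le> (\<Sum>k=1..p. norm w ^ k)"
      by (intro sum_mono) (auto simp: norm_divide norm_power divide_le_eq mult_le_cancel_left1)
    finally show ?thesis .
  qed
  ultimately show ?thesis by (simp add: ln_weierstrass_factor_def)
qed

lemma pi_add_sum_power_le_min:
  fixes s :: real
  assumes "1 / 2 < s"
  shows "pi + (\<Sum>k=1..p. s ^ k) \<le> (pi + real p) * 2 ^ Suc p * min (s ^ p) (s ^ Suc p)"
proof (cases "s \<le> 1")
  case True
  have "(\<Sum>k=1..p. s ^ k) \<le> (\<Sum>k=1..p. 1)"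
    using True assms by (intro sum_mono power_le_one) auto
  hence "pi + (\<Sum>k=1..p. s ^ k) \<le> (pi + real p) * 1" by simp
  also have "\<dots> \<le> (pi + real p) * (2 * s) ^ Suc p"
    using assms pi_gt3 by (intro mult_left_mono one_le_power) auto
  also have "\<dots> = (pi + real p) * 2 ^ Suc p * min (s ^ p) (s ^ Suc p)"
    using True assms by (simp add: power_mult_distrib min_absorb2 power_decreasing del: power_Suc)
  finally show ?thesis .
next
  case False
  have "(\<Sum>k=1..p. s ^ k) \<le> (\<Sum>k=1..p. s ^ p)"
    using False by (intro sum_mono power_increasing) auto
  hence "(\<Sum>k=1..p. s ^ k) \<le> real p * s ^ p" by simp
  moreover have "pi \<le> pi * s ^ p"
    using False pi_gt3 by (simp add: one_le_power)
  ultimately have "pi + (\<Sum>k=1..p. s ^ k) \<le> (pi + real p) * s ^ p"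
    unfolding distrib_right by linarith
  also have "\<dots> \<le> (pi + real p) * 2 ^ Suc p * s ^ p"
  proof (intro mult_right_mono)
    have "(pi + real p) * 1 \<le> (pi + real p) * 2 ^ Suc p"
      using pi_gt3 by (intro mult_left_mono one_le_power) auto
    thus "pi + real p \<le> (pi + real p) * 2 ^ Suc p" by simp
  qed (use False in simp)
  also have "\<dots> = (pi + real p) * 2 ^ Suc p * min (s ^ p) (s ^ Suc p)"
    using False by (simp add: min_absorb1 power_increasing del: power_Suc)
  finally show ?thesis .
qed

lemma abs_Im_ln_weierstrass_factor_le_min:
  assumes "w \<noteq> 1"
  shows "\<bar>Im (ln_weierstrass_factor p w)\<bar>
           \<le> (pi + real p) * 2 ^ Suc p * min (norm w ^ p) (norm w ^ Suc p)"
proof (cases "norm w \<le> 1 / 2")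
  case True
  have "\<bar>Im (ln_weierstrass_factor p w)\<bar> \<le> 2 * norm w ^ Suc p"
    by (rule order_trans[OF abs_Im_le_cmod norm_ln_weierstrass_factor_le[OF True]])
  also have "\<dots> \<le> (pi + real p) * 2 ^ Suc p * norm w ^ Suc p"
  proof (intro mult_right_mono)
    show "2 \<le> (pi + real p) * 2 ^ Suc p"
      using pi_gt3 mult_mono[of 1 "pi + real p" 2 "2 ^ Suc p"] by simp
  qed simp
  also have "\<dots> = (pi + real p) * 2 ^ Suc p * min (norm w ^ p) (norm w ^ Suc p)"
    using True by (simp add: min_absorb2 power_decreasing del: power_Suc)
  finally show ?thesis .
next
  case False
  hence "1 / 2 < norm w" by simp
  from order_trans[OF abs_Im_ln_weierstrass_factor_le[OF assms] pi_add_sum_power_le_min[OF this]]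
  show ?thesis .
qed

section \<open>The logarithm of a quotient of conjugate factors\<close>

definition ln_factor_ratio :: "nat \<Rightarrow> complex \<Rightarrow> complex \<Rightarrow> complex" where
  "ln_factor_ratio p b z = ln_weierstrass_factor p (z / cnj b) - ln_weierstrass_factor p (z / b)"

lemma one_minus_of_real_div_notin_nonpos_Reals:
  assumes "Im a \<noteq> 0"
  shows "1 - complex_of_real x / a \<notin> \<real>\<^sub>\<le>\<^sub>0"
proof -
  have "Im (complex_of_real x / a) = - x * Im a / (norm a)\<^sup>2"
    by (simp add: Im_divide cmod_def)
  hence "x \<noteq> 0 \<Longrightarrow> Im (1 - complex_of_real x / a) \<noteq> 0"
    using assms by auto
  thus ?thesis by (cases "x = 0") (auto simp: complex_nonpos_Reals_iff)
qed

lemma norm_ln_factor_ratio_of_real_le: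
  assumes "Im b \<noteq> 0" "\<bar>x\<bar> / norm b \<le> y"
  shows "norm (ln_factor_ratio p b (complex_of_real x))
           \<le> 2 * (pi + real p) * 2 ^ Suc p * min (y ^ p) (y ^ Suc p)"
proof -
  define w where "w = complex_of_real x / b"
  have w: "1 - w \<notin> \<real>\<^sub>\<le>\<^sub>0"
    unfolding w_def using assms(1) by (rule one_minus_of_real_div_notin_nonpos_Reals)
  hence "ln_factor_ratio p b (complex_of_real x) = cnj (ln_weierstrass_factor p w) - ln_weierstrass_factor p w"
    by (simp add: ln_factor_ratio_def w_def ln_weierstrass_factor_cnj [symmetric])
  also have "norm \<dots> = 2 * \<bar>Im (ln_weierstrass_factor p w)\<bar>"
    using complex_diff_cnj[of "ln_weierstrass_factor p w"] by (simp add: norm_minus_commute norm_mult)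
  also have "\<dots> \<le> 2 * ((pi + real p) * 2 ^ Suc p * min (norm w ^ p) (norm w ^ Suc p))"
    using w by (intro mult_left_mono abs_Im_ln_weierstrass_factor_le_min) auto
  also have "\<dots> \<le> 2 * ((pi + real p) * 2 ^ Suc p * min (y ^ p) (y ^ Suc p))"
    using assms(2) pi_gt3 by (intro mult_left_mono min.mono power_mono) (auto simp: w_def norm_divide)
  finally show ?thesis by (simp only: mult.assoc)
qed

lemma norm_ln_factor_ratio_le:
  assumes "norm z \<le> R" "2 * R \<le> norm b"
  shows "norm (ln_factor_ratio p b z) \<le> 4 * R ^ Suc p * inverse (norm b) ^ Suc p"
proof -
  have R: "R / norm b \<le> 1 / 2"
    using assms by (cases "norm b = 0") (auto simp: field_simps)
  have bound: "norm (ln_weierstrass_factor p (z / c)) \<le> 2 * (R / norm b) ^ Suc p"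
    if "norm c = norm b" for c
  proof -
    have w: "norm (z / c) \<le> R / norm b"
      using assms that by (simp add: norm_divide divide_right_mono)
    hence "norm (ln_weierstrass_factor p (z / c)) \<le> 2 * norm (z / c) ^ Suc p"
      using R by (intro norm_ln_weierstrass_factor_le) linarith
    also have "\<dots> \<le> 2 * (R / norm b) ^ Suc p"
      using w by (intro mult_left_mono power_mono) auto
    finally show ?thesis .
  qed
  have "norm (ln_factor_ratio p b z)
          \<le> norm (ln_weierstrass_factor p (z / cnj b)) + norm (ln_weierstrass_factor p (z / b))"
    unfolding ln_factor_ratio_def by (rule norm_triangle_ineq4)
  also have "\<dots> \<le> 4 * (R / norm b) ^ Suc p"
    using bound[of b] bound[of "cnj b"] by simp
  also have "\<dots> = 4 * R ^ Suc p * inverse (norm b) ^ Suc p"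
    by (simp only: divide_inverse power_mult_distrib mult.assoc)
  finally show ?thesis .
qed

lemma field_differentiable_ln_factor_ratio:
  assumes "1 - z / b \<notin> \<real>\<^sub>\<le>\<^sub>0" "1 - z / cnj b \<notin> \<real>\<^sub>\<le>\<^sub>0"
  shows "ln_factor_ratio p b field_differentiable at z"
proof -
  have "(\<lambda>z. ln_weierstrass_factor p (z / c)) field_differentiable at z" if "1 - z / c \<notin> \<real>\<^sub>\<le>\<^sub>0" for c
  proof -
    have "((\<lambda>z. z / c) has_field_derivative 1 / c) (at z)"
      by (rule DERIV_cdivide [OF DERIV_ident])
    from DERIV_chain2[OF has_field_derivative_ln_weierstrass_factor[OF that] this]
    show ?thesis by (auto simp: field_differentiable_def)
  qed
  thus ?thesis
    unfolding ln_factor_ratio_def [abs_def] using assms by (intro field_differentiable_diff)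
qed

lemma weierstrass_factor_ratio_eq_exp:
  assumes "1 - z / b \<notin> \<real>\<^sub>\<le>\<^sub>0" "1 - z / cnj b \<notin> \<real>\<^sub>\<le>\<^sub>0"
  shows "weierstrass_factor p (z / cnj b) / weierstrass_factor p (z / b) = exp (ln_factor_ratio p b z)"
proof -
  have "z / b \<noteq> 1" "z / cnj b \<noteq> 1" using assms by auto
  thus ?thesis by (simp add: ln_factor_ratio_def exp_diff exp_ln_weierstrass_factor)
qed

section \<open>Estimates for sums of powers\<close>

lemma sum_le_telescope:
  fixes f F :: "nat \<Rightarrow> real"
  assumes "a \<le> b" "\<And>m. a < m \<Longrightarrow> m \<le> b \<Longrightarrow> f m \<le> F m - F (m - 1)"
  shows "(\<Sum>m\<in>{a<..b}. f m) \<le> F b - F a"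
  using assms
proof (induction b rule: dec_induct)
  case (step n)
  have "{a<..Suc n} = insert (Suc n) {a<..n}" using step.hyps by auto
  hence "(\<Sum>m\<in>{a<..Suc n}. f m) = f (Suc n) + (\<Sum>m\<in>{a<..n}. f m)" by simp
  also have "\<dots> \<le> (F (Suc n) - F n) + (F n - F a)"
    using step step.prems[of "Suc n"] by (intro add_mono) auto
  finally show ?case by simp
qed simp

lemma powr_le_diff_powr_div:
  fixes m l :: real
  assumes "1 < m" "l \<le> 1" "l \<noteq> 0"
  shows "m powr (l - 1) \<le> (m powr l - (m - 1) powr l) / l"
proof -
  have "((\<lambda>u. u powr l / l) has_real_derivative x powr (l - 1)) (at x)" if "m - 1 \<le> x" "x \<le> m" for x
    using that assms by (auto intro!: derivative_eq_intros)
  from MVT2[of "m - 1" m, OF _ this] obtain z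
    where z: "m - 1 < z" "z < m" "m powr l / l - (m - 1) powr l / l = (m - (m - 1)) * z powr (l - 1)"
    by auto
  have "m powr (l - 1) \<le> z powr (l - 1)"
    using z assms by (intro powr_mono2') auto
  also have "\<dots> = (m powr l - (m - 1) powr l) / l"
    using z(3) by (simp add: diff_divide_distrib)
  finally show ?thesis .
qed

lemma sum_powr_le:
  assumes "0 < l" "l \<le> 1"
  shows "(\<Sum>m\<in>{0<..M}. real m powr (l - 1)) \<le> real M powr l / l"
proof -
  have "(\<Sum>m\<in>{0<..M}. real m powr (l - 1)) \<le> real M powr l / l - real 0 powr l / l"
  proof (rule sum_le_telescope)
    fix m :: nat assume "0 < m"
    show "real m powr (l - 1) \<le> real m powr l / l - real (m - 1) powr l / l"
    proof (cases "m = 1")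
      case False
      with \<open>0 < m\<close> have "1 < real m" by simp
      from powr_le_diff_powr_div[OF this, of l] assms \<open>0 < m\<close> show ?thesis
        by (simp add: of_nat_diff diff_divide_distrib)
    qed (use assms in \<open>simp add: le_divide_eq\<close>)
  qed simp
  thus ?thesis by simp
qed

lemma sum_powr_greaterThan_le:
  assumes "l < 0" "1 \<le> M"
  shows "(\<Sum>m\<in>{M<..K}. real m powr (l - 1)) \<le> real M powr l / - l"
proof (cases "M \<le> K")
  case True
  have "(\<Sum>m\<in>{M<..K}. real m powr (l - 1)) \<le> real K powr l / l - real M powr l / l"
  proof (rule sum_le_telescope[OF True])
    fix m :: nat assume "M < m"
    with assms have "1 < real m" by simp
    from powr_le_diff_powr_div[OF this, of l] assms \<open>M < m\<close>
    show "real m powr (l - 1) \<le> real m powr l / l - real (m - 1) powr l / l"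
      by (simp add: of_nat_diff diff_divide_distrib)
  qed
  moreover have "real K powr l / l \<le> 0" using assms by (simp add: divide_nonneg_neg)
  ultimately show ?thesis by simp
qed (use assms in \<open>simp add: divide_nonneg_neg\<close>)

lemma power_mult_powr: "0 < m \<Longrightarrow> (Y * m powr e) ^ k = Y ^ k * m powr (real k * e)"
  for m Y e :: real
  by (simp add: power_mult_distrib powr_power)

lemma sum_power_head_le:
  fixes Y \<rho> :: real
  assumes "0 < \<rho>" "real p < \<rho>" "0 < Y" "real M \<le> Y powr \<rho>"
  shows "(\<Sum>m\<in>{0<..M}. (Y * real m powr (-1 / \<rho>)) ^ p) \<le> Y powr \<rho> / (1 - real p / \<rho>)"
proof -
  define l where "l = 1 - real p / \<rho>"
  have l: "0 < l" "l \<le> 1" using assms by (auto simp: l_def field_simps)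
  have "(\<Sum>m\<in>{0<..M}. (Y * real m powr (-1 / \<rho>)) ^ p) = Y ^ p * (\<Sum>m\<in>{0<..M}. real m powr (l - 1))"
    by (simp add: power_mult_powr sum_distrib_left l_def)
  also have "\<dots> \<le> Y ^ p * (real M powr l / l)"
    using assms by (intro mult_left_mono sum_powr_le l) auto
  also have "\<dots> \<le> Y ^ p * ((Y powr \<rho>) powr l / l)"
    using assms l by (intro mult_left_mono divide_right_mono powr_mono2) auto
  also have "\<dots> = Y powr \<rho> / l"
  proof -
    have "Y ^ p * (Y powr \<rho>) powr l = Y powr (real p + \<rho> * l)"
      using assms by (simp add: powr_realpow [symmetric] powr_powr powr_add)
    also have "real p + \<rho> * l = \<rho>" using assms by (simp add: l_def field_simps)
    finally show ?thesis by simp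
  qed
  finally show ?thesis by (simp add: l_def)
qed

lemma sum_power_tail_le:
  fixes Y \<rho> :: real
  assumes "0 < \<rho>" "\<rho> < real p + 1" "0 < Y" "1 \<le> M" "Y powr \<rho> \<le> 2 * real M"
  shows "(\<Sum>m\<in>{M<..K}. (Y * real m powr (-1 / \<rho>)) ^ Suc p)
           \<le> 2 powr ((real p + 1) / \<rho> - 1) / ((real p + 1) / \<rho> - 1) * Y powr \<rho>"
proof -
  define l where "l = 1 - (real p + 1) / \<rho>"
  have l: "l < 0" using assms by (auto simp: l_def field_simps)
  have "(\<Sum>m\<in>{M<..K}. (Y * real m powr (-1 / \<rho>)) ^ Suc p)
          = Y ^ Suc p * (\<Sum>m\<in>{M<..K}. real m powr (l - 1))"
  proof -
    have eq: "(Y * real m powr (-1 / \<rho>)) ^ Suc p = Y ^ Suc p * real m powr (l - 1)"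
      if "m \<in> {M<..K}" for m
    proof -
      have "real (Suc p) * (-1 / \<rho>) = l - 1" using assms by (simp add: l_def field_simps)
      thus ?thesis using that power_mult_powr[of "real m" Y "-1 / \<rho>" "Suc p"] by simp
    qed
    show ?thesis unfolding sum_distrib_left by (rule sum.cong [OF refl eq])
  qed
  also have "\<dots> \<le> Y ^ Suc p * (real M powr l / - l)"
    using assms by (intro mult_left_mono sum_powr_greaterThan_le l) auto
  also have "\<dots> \<le> Y ^ Suc p * ((Y powr \<rho> / 2) powr l / - l)"
    using assms l by (intro mult_left_mono divide_right_mono powr_mono2') auto
  also have "\<dots> = 2 powr (- l) / - l * Y powr \<rho>"
  proof -
    have "(Y powr \<rho> / 2) powr l = Y powr (\<rho> * l) * 2 powr (- l)"
      using assms by (simp add: powr_divide powr_powr powr_minus_divide)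
    moreover have "Y ^ Suc p * Y powr (\<rho> * l) = Y powr (real p + 1 + \<rho> * l)"
      using assms by (simp add: powr_realpow [symmetric] powr_add)
    moreover have "real p + 1 + \<rho> * l = \<rho>" using assms by (simp add: l_def field_simps)
    ultimately show ?thesis by (simp add: field_simps)
  qed
  finally show ?thesis by (simp add: l_def)
qed

lemma sum_min_powers_le:
  fixes Y \<rho> :: real
  assumes "0 < \<rho>" "real p < \<rho>" "\<rho> < real p + 1" "1 \<le> Y"
  shows "(\<Sum>m\<in>{0<..N}. min ((Y * real m powr (-1 / \<rho>)) ^ p) ((Y * real m powr (-1 / \<rho>)) ^ Suc p))
           \<le> (1 / (1 - real p / \<rho>) + 2 powr ((real p + 1) / \<rho> - 1) / ((real p + 1) / \<rho> - 1))
              * Y powr \<rho>"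
proof -
  define y where "y m = Y * real m powr (-1 / \<rho>)" for m :: nat
  define M where "M = nat \<lfloor>Y powr \<rho>\<rfloor>"
  define K where "K = max N M"
  have "1 \<le> Y powr \<rho>" using assms by (simp add: ge_one_powr_ge_zero)
  hence "real M \<le> Y powr \<rho>" "Y powr \<rho> < real M + 1" "1 \<le> M"
    unfolding M_def by linarith+
  hence M: "real M \<le> Y powr \<rho>" "Y powr \<rho> \<le> 2 * real M" "1 \<le> M" by linarith+
  have y0: "0 \<le> y m" for m using assms by (simp add: y_def)
  have "(\<Sum>m\<in>{0<..N}. min (y m ^ p) (y m ^ Suc p)) \<le> (\<Sum>m\<in>{0<..K}. min (y m ^ p) (y m ^ Suc p))"
    using y0 by (intro sum_mono2) (auto simp: K_def)
  also have "\<dots> \<le> (\<Sum>m\<in>{0<..M}. y m ^ p) + (\<Sum>m\<in>{M<..K}. y m ^ Suc p)"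
  proof -
    have "{0<..K} = {0<..M} \<union> {M<..K}" using M by (auto simp: K_def)
    hence "(\<Sum>m\<in>{0<..K}. min (y m ^ p) (y m ^ Suc p))
             = (\<Sum>m\<in>{0<..M}. min (y m ^ p) (y m ^ Suc p)) + (\<Sum>m\<in>{M<..K}. min (y m ^ p) (y m ^ Suc p))"
      by (simp add: sum.union_disjoint)
    also have "\<dots> \<le> (\<Sum>m\<in>{0<..M}. y m ^ p) + (\<Sum>m\<in>{M<..K}. y m ^ Suc p)"
      by (intro add_mono sum_mono) auto
    finally show ?thesis .
  qed
  also have "\<dots> \<le> Y powr \<rho> / (1 - real p / \<rho>)
                   + 2 powr ((real p + 1) / \<rho> - 1) / ((real p + 1) / \<rho> - 1) * Y powr \<rho>"
    unfolding y_def using assms M by (intro add_mono sum_power_head_le sum_power_tail_le) auto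
  finally show ?thesis unfolding y_def by (simp add: distrib_right)
qed

lemma summable_power_scaled_root:
  fixes Y \<rho> :: real
  assumes "0 < \<rho>" "\<rho> < real k"
  shows "summable (\<lambda>n. (Y * real (Suc n) powr (-1 / \<rho>)) ^ k)"
proof -
  have "1 < real k / \<rho>" using assms by simp
  hence "summable (\<lambda>n. real (Suc n) powr (- (real k / \<rho>)))"
    using summable_Suc_iff[of "\<lambda>n. real n powr (- (real k / \<rho>))"] summable_real_powr_iff by simp
  hence "summable (\<lambda>n. Y ^ k * real (Suc n) powr (real k * (-1 / \<rho>)))"
    by (intro summable_mult) simp
  thus ?thesis by (simp only: power_mult_powr of_nat_0_less_iff zero_less_Suc)
qed

lemma suminf_min_powers_le:
  fixes Y \<rho> :: real
  assumes "0 < \<rho>" "real p < \<rho>" "\<rho> < real p + 1" "1 \<le> Y"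
  shows "summable (\<lambda>n. min ((Y * real (Suc n) powr (-1 / \<rho>)) ^ p) ((Y * real (Suc n) powr (-1 / \<rho>)) ^ Suc p))"
    (is "summable ?g")
    and "(\<Sum>n. min ((Y * real (Suc n) powr (-1 / \<rho>)) ^ p) ((Y * real (Suc n) powr (-1 / \<rho>)) ^ Suc p))
           \<le> (1 / (1 - real p / \<rho>) + 2 powr ((real p + 1) / \<rho> - 1) / ((real p + 1) / \<rho> - 1))
              * Y powr \<rho>"
proof -
  show sg: "summable ?g"
    using assms by (intro summable_comparison_test'[OF summable_power_scaled_root[of \<rho> "Suc p" Y]]) auto
  show "suminf ?g \<le> (1 / (1 - real p / \<rho>) + 2 powr ((real p + 1) / \<rho> - 1) / ((real p + 1) / \<rho> - 1))
                     * Y powr \<rho>"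
  proof (rule suminf_le_const[OF sg])
    fix N
    have "{0<..N} = Suc ` {..<N}" by (auto simp: image_Suc_lessThan)
    hence "sum ?g {..<N}
             = (\<Sum>m\<in>{0<..N}. min ((Y * real m powr (-1 / \<rho>)) ^ p) ((Y * real m powr (-1 / \<rho>)) ^ Suc p))"
      by (simp add: sum.reindex)
    also have "\<dots> \<le> (1 / (1 - real p / \<rho>) + 2 powr ((real p + 1) / \<rho> - 1) / ((real p + 1) / \<rho> - 1))
                     * Y powr \<rho>"
      by (rule sum_min_powers_le[OF assms])
    finally show "sum ?g {..<N} \<le> \<dots>" .
  qed
qed

section \<open>Growth of the points\<close>

lemma norm_ge_of_counting_bound:
  fixes a :: "nat \<Rightarrow> 'a::real_normed_vector" and C0 \<rho> :: real
  assumes mono: "\<And>j. norm (a j) \<le> norm (a (Suc j))"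
    and count: "\<And>r. r \<ge> 1 \<Longrightarrow>
                  finite {j. norm (a j) \<le> r} \<and> real (card {j. norm (a j) \<le> r}) \<le> C0 * r powr \<rho>"
    and "0 < \<rho>" "a 0 \<noteq> 0"
  obtains c where "0 < c" "\<And>n. c * real (Suc n) powr (1 / \<rho>) \<le> norm (a n)"
proof -
  define r where "r n = max 1 (norm (a n))" for n
  have mono': "norm (a i) \<le> norm (a n)" if "i \<le> n" for i n
    using incseq_SucI[of "\<lambda>j. norm (a j)"] mono that by (simp add: incseq_def)
  have card: "real (Suc n) \<le> C0 * r n powr \<rho>" for n
  proof -
    have "{..n} \<subseteq> {j. norm (a j) \<le> r n}" using mono' by (force simp: r_def le_max_iff_disj)
    hence "card {..n} \<le> card {j. norm (a j) \<le> r n}"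
      using count[of "r n"] by (intro card_mono) (auto simp: r_def)
    thus ?thesis using count[of "r n"] by (simp add: r_def)
  qed
  have "0 < C0 * r 0 powr \<rho>" using card[of 0] by linarith
  hence C0: "0 < C0" by (simp add: zero_less_mult_iff r_def)
  define c where "c = min 1 (norm (a 0)) / C0 powr (1 / \<rho>)"
  have "0 < c" using C0 assms by (simp add: c_def)
  moreover have "c * real (Suc n) powr (1 / \<rho>) \<le> norm (a n)" for n
  proof -
    have "real (Suc n) powr (1 / \<rho>) \<le> (C0 * r n powr \<rho>) powr (1 / \<rho>)"
      using card[of n] assms by (intro powr_mono2) auto
    also have "\<dots> = C0 powr (1 / \<rho>) * r n"
      using C0 assms by (simp add: r_def powr_mult powr_powr)
    finally have "c * real (Suc n) powr (1 / \<rho>) \<le> min 1 (norm (a 0)) * r n"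
      using C0 \<open>0 < c\<close> by (auto simp: c_def field_simps dest: mult_left_mono[of _ _ c])
    also have "\<dots> \<le> norm (a n)"
      using mono'[of 0 n] by (auto simp: r_def min_def max_def intro: mult_left_le_one_le)
    finally show ?thesis .
  qed
  ultimately show ?thesis using that by blast
qed

lemma filterlim_at_top_if_summable_inverse_power:
  fixes u :: "nat \<Rightarrow> real"
  assumes pos: "\<And>n. 0 < u n" and "summable (\<lambda>n. inverse (u n) ^ Suc k)"
  shows "filterlim u at_top sequentially"
proof -
  have "(\<lambda>n. root (Suc k) (inverse (u n) ^ Suc k)) \<longlonglongrightarrow> root (Suc k) 0"
    by (intro tendsto_real_root summable_LIMSEQ_zero assms)
  hence "(\<lambda>n. inverse (u n)) \<longlonglongrightarrow> 0"
    using pos by (simp add: real_root_power_cancel less_imp_le del: power_Suc)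
  hence "filterlim (\<lambda>n. inverse (inverse (u n))) at_top sequentially"
    using pos by (intro filterlim_inverse_at_top) auto
  thus ?thesis by simp
qed

lemma summable_inverse_norm_power:
  fixes a :: "nat \<Rightarrow> 'a::real_normed_vector" and c \<rho> :: real
  assumes "0 < c" "\<And>n. c * real (Suc n) powr (1 / \<rho>) \<le> norm (a n)" "0 < \<rho>" "\<rho> < real k"
  shows "summable (\<lambda>n. inverse (norm (a n)) ^ k)"
proof (rule summable_comparison_test'[OF summable_power_scaled_root[of \<rho> k "inverse c"]])
  fix n
  have "inverse (norm (a n)) \<le> inverse (c * real (Suc n) powr (1 / \<rho>))"
    using assms(1) assms(2)[of n] by (intro le_imp_inverse_le) auto
  also have "\<dots> = inverse c * real (Suc n) powr (-1 / \<rho>)"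
    by (simp add: powr_minus_divide field_simps)
  finally show "norm (inverse (norm (a n)) ^ k) \<le> (inverse c * real (Suc n) powr (-1 / \<rho>)) ^ k"
    by (simp add: power_mono)
qed (use assms in auto)

section \<open>The logarithmic integral\<close>

lemma oint0_logarithmic_derivative_eq:
  fixes f g g' :: "complex \<Rightarrow> complex"
  assumes "open V" and V: "\<And>t. \<bar>t\<bar> \<le> \<bar>x\<bar> \<Longrightarrow> complex_of_real t \<in> V"
    and f: "\<And>z. z \<in> V \<Longrightarrow> f z = exp (g z)"
    and g: "\<And>z. z \<in> V \<Longrightarrow> (g has_field_derivative g' z) (at z)"
  shows "oint0 (\<lambda>t. deriv f (complex_of_real t) / f (complex_of_real t)) x
           = g (complex_of_real x) - g 0"
proof -
  have logderiv: "deriv f z / f z = g' z" if "z \<in> V" for z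
  proof -
    have "((\<lambda>z. exp (g z)) has_field_derivative exp (g z) * g' z) (at z)"
      using g[OF that] by (auto intro!: derivative_eq_intros)
    hence "(f has_field_derivative exp (g z) * g' z) (at z)"
      by (rule has_field_derivative_transform_within_open[OF _ \<open>open V\<close> that]) (simp add: f)
    thus ?thesis using f[OF that] by (simp add: DERIV_imp_deriv)
  qed
  have FTC: "((\<lambda>t. deriv f (complex_of_real t) / f (complex_of_real t)) has_integral
               (g (complex_of_real v) - g (complex_of_real u))) {u..v}"
    if "u \<le> v" "\<bar>u\<bar> \<le> \<bar>x\<bar>" "\<bar>v\<bar> \<le> \<bar>x\<bar>" for u v
  proof -
    have inV: "complex_of_real t \<in> V" if "t \<in> {u..v}" for t
      using that \<open>\<bar>u\<bar> \<le> \<bar>x\<bar>\<close> \<open>\<bar>v\<bar> \<le> \<bar>x\<bar>\<close> by (intro V) auto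
    have "((\<lambda>t. g' (complex_of_real t)) has_integral (g (complex_of_real v) - g (complex_of_real u))) {u..v}"
      using inV by (intro fundamental_theorem_of_calculus[OF \<open>u \<le> v\<close>] has_vector_derivative_real_field g)
    thus ?thesis by (rule has_integral_eq[rotated]) (use logderiv inV in auto)
  qed
  show ?thesis
    using FTC[of 0 x] FTC[of x 0] by (auto simp: oint0_def integral_unique)
qed

lemma open_nbhd_avoiding_branch_cuts:
  fixes a :: "nat \<Rightarrow> complex"
  assumes im: "\<And>n. Im (a n) \<noteq> 0" and lim: "filterlim (\<lambda>n. norm (a n)) at_top sequentially"
  obtains V where "open V" "V \<subseteq> ball 0 R" "\<And>t. \<bar>t\<bar> < R \<Longrightarrow> complex_of_real t \<in> V"
    "\<And>z n. z \<in> V \<Longrightarrow> 1 - z / a n \<notin> \<real>\<^sub>\<le>\<^sub>0 \<and> 1 - z / cnj (a n) \<notin> \<real>\<^sub>\<le>\<^sub>0"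
proof -
  have a0: "a n \<noteq> 0" "cnj (a n) \<noteq> 0" for n using im[of n] by auto
  obtain N where N: "\<And>n. N \<le> n \<Longrightarrow> 2 * R \<le> norm (a n)"
    using lim by (auto simp: filterlim_at_top eventually_sequentially)
  define V where "V = ball 0 R \<inter> (\<Inter>n\<in>{..<N}. (\<lambda>z. 1 - z / a n) -` (- \<real>\<^sub>\<le>\<^sub>0)
                                          \<inter> (\<lambda>z. 1 - z / cnj (a n)) -` (- \<real>\<^sub>\<le>\<^sub>0))"
  have "open V" unfolding V_def
    by (intro open_Int open_ball open_INT finite_lessThan ballI continuous_open_vimage)
       (auto intro!: continuous_intros simp: a0)
  moreover have "V \<subseteq> ball 0 R" by (auto simp: V_def)
  moreover have "complex_of_real t \<in> V" if "\<bar>t\<bar> < R" for t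
    using that im by (auto simp: V_def intro!: one_minus_of_real_div_notin_nonpos_Reals)
  moreover have "1 - z / a n \<notin> \<real>\<^sub>\<le>\<^sub>0 \<and> 1 - z / cnj (a n) \<notin> \<real>\<^sub>\<le>\<^sub>0" if "z \<in> V" for z n
  proof (cases "n < N")
    case False
    have "norm z / norm (a n) \<le> 1 / 2"
      using that N[of n] False a0 by (auto simp: V_def field_simps)
    thus ?thesis by (auto simp: norm_divide intro!: one_minus_notin_nonpos_Reals)
  qed (use that in \<open>auto simp: V_def\<close>)
  ultimately show ?thesis using that by blast
qed

lemma weierstrass_ratio_product_eq_exp_suminf:
  fixes a :: "nat \<Rightarrow> complex" and f :: "complex \<Rightarrow> complex"
  assumes im: "\<And>n. Im (a n) \<noteq> 0"
    and summable: "summable (\<lambda>n. inverse (norm (a n)) ^ Suc p)"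
    and f_def: "f = (\<lambda>z. \<Prod>n. weierstrass_factor p (z / cnj (a n)) / weierstrass_factor p (z / a n))"
  obtains V g g' where "open V" "\<And>t. \<bar>t\<bar> < R \<Longrightarrow> complex_of_real t \<in> V"
    "\<And>z. z \<in> V \<Longrightarrow> (\<lambda>n. ln_factor_ratio p (a n) z) sums g z"
    "\<And>z. z \<in> V \<Longrightarrow> (g has_field_derivative g' z) (at z)"
    "\<And>z. z \<in> V \<Longrightarrow> f z = exp (g z)"
proof -
  have "0 < norm (a n)" for n using im[of n] by auto
  hence lim: "filterlim (\<lambda>n. norm (a n)) at_top sequentially"
    using summable by (rule filterlim_at_top_if_summable_inverse_power)
  obtain V where "open V" "V \<subseteq> ball 0 R" and real_in_V: "\<And>t. \<bar>t\<bar> < R \<Longrightarrow> complex_of_real t \<in> V"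
    and cuts: "\<And>z n. z \<in> V \<Longrightarrow> 1 - z / a n \<notin> \<real>\<^sub>\<le>\<^sub>0 \<and> 1 - z / cnj (a n) \<notin> \<real>\<^sub>\<le>\<^sub>0"
    using open_nbhd_avoiding_branch_cuts[OF im lim] by blast
  have "\<forall>\<^sub>F n in sequentially. 2 * R \<le> norm (a n)"
    using lim by (simp add: filterlim_at_top)
  hence bound: "\<forall>\<^sub>F n in sequentially. \<forall>z\<in>V.
                  norm (ln_factor_ratio p (a n) z) \<le> 4 * R ^ Suc p * inverse (norm (a n)) ^ Suc p"
    using \<open>V \<subseteq> ball 0 R\<close> by (elim eventually_mono) (auto intro!: norm_ln_factor_ratio_le simp del: power_Suc)
  have deriv: "(ln_factor_ratio p (a n) has_field_derivative deriv (ln_factor_ratio p (a n)) z) (at z)"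
    if "z \<in> V" for n z
    using cuts[OF that] by (simp add: field_differentiable_derivI field_differentiable_ln_factor_ratio)
  obtain g g' where g: "\<forall>z\<in>V. ((\<lambda>n. ln_factor_ratio p (a n) z) sums g z)
      \<and> ((\<lambda>n. deriv (ln_factor_ratio p (a n)) z) sums g' z) \<and> (g has_field_derivative g' z) (at z)"
    using series_and_derivative_comparison[OF \<open>open V\<close> summable_mult[OF summable] deriv bound] by blast
  have "f z = exp (g z)" if "z \<in> V" for z
  proof -
    have "f z = (\<Prod>n. exp (ln_factor_ratio p (a n) z))"
      using cuts[OF that] by (simp add: f_def weierstrass_factor_ratio_eq_exp)
    also have "\<dots> = exp (g z)"
      using g that by (subst prodinf_exp) (auto simp: sums_iff)
    finally show ?thesis .
  qed
  with \<open>open V\<close> real_in_V g show ?thesis using that by blast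
qed

lemma oint0_logarithmic_derivative_eq_suminf:
  fixes a :: "nat \<Rightarrow> complex" and f :: "complex \<Rightarrow> complex"
  assumes im: "\<And>n. Im (a n) \<noteq> 0"
    and summable: "summable (\<lambda>n. inverse (norm (a n)) ^ Suc p)"
    and f_def: "f = (\<lambda>z. \<Prod>n. weierstrass_factor p (z / cnj (a n)) / weierstrass_factor p (z / a n))"
  shows "oint0 (\<lambda>t. deriv f (complex_of_real t) / f (complex_of_real t)) x
           = (\<Sum>n. ln_factor_ratio p (a n) (complex_of_real x))"
proof -
  obtain V g g' where "open V" and real_in_V: "\<And>t. \<bar>t\<bar> < \<bar>x\<bar> + 1 \<Longrightarrow> complex_of_real t \<in> V"
    and sums: "\<And>z. z \<in> V \<Longrightarrow> (\<lambda>n. ln_factor_ratio p (a n) z) sums g z"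
    and "\<And>z. z \<in> V \<Longrightarrow> (g has_field_derivative g' z) (at z)" "\<And>z. z \<in> V \<Longrightarrow> f z = exp (g z)"
    using weierstrass_ratio_product_eq_exp_suminf[OF im summable f_def] by metis
  hence "oint0 (\<lambda>t. deriv f (complex_of_real t) / f (complex_of_real t)) x = g (complex_of_real x) - g 0"
    by (intro oint0_logarithmic_derivative_eq real_in_V) auto
  moreover have "g 0 = 0"
  proof -
    have "(\<lambda>n. ln_factor_ratio p (a n) 0) sums g 0"
      using sums[OF real_in_V[of 0]] by (simp add: add_nonneg_pos)
    thus ?thesis by (simp add: ln_factor_ratio_def sums_0 sums_unique2)
  qed
  moreover have "g (complex_of_real x) = (\<Sum>n. ln_factor_ratio p (a n) (complex_of_real x))"
    using sums[OF real_in_V[of x]] by (simp add: sums_iff)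
  ultimately show ?thesis by simp
qed

lemma norm_suminf_ln_factor_ratio_le:
  fixes a :: "nat \<Rightarrow> complex" and c \<rho> :: real
  assumes im: "\<And>n. Im (a n) \<noteq> 0"
    and c: "0 < c" "\<And>n. c * real (Suc n) powr (1 / \<rho>) \<le> norm (a n)"
    and \<rho>: "0 < \<rho>" "real p < \<rho>" "\<rho> < real p + 1"
  obtains B where "\<And>x. c \<le> \<bar>x\<bar> \<Longrightarrow>
    norm (\<Sum>n. ln_factor_ratio p (a n) (complex_of_real x)) \<le> B * \<bar>x\<bar> powr \<rho>"
proof -
  define K where "K = 2 * (pi + real p) * 2 ^ Suc p"
  define S where "S = 1 / (1 - real p / \<rho>) + 2 powr ((real p + 1) / \<rho> - 1) / ((real p + 1) / \<rho> - 1)"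
  have "norm (\<Sum>n. ln_factor_ratio p (a n) (complex_of_real x)) \<le> K * S / c powr \<rho> * \<bar>x\<bar> powr \<rho>"
    if x: "c \<le> \<bar>x\<bar>" for x
  proof -
    define Y where "Y = \<bar>x\<bar> / c"
    define y where "y n = Y * real (Suc n) powr (-1 / \<rho>)" for n
    have Y: "1 \<le> Y" using x c by (simp add: Y_def)
    have summable: "summable (\<lambda>n. min (y n ^ p) (y n ^ Suc p))"
      unfolding y_def by (rule suminf_min_powers_le(1)[OF \<rho> Y])
    have K: "0 \<le> K" by (simp add: K_def)
    have "norm (ln_factor_ratio p (a n) (complex_of_real x)) \<le> K * min (y n ^ p) (y n ^ Suc p)" for n
    proof -
      have "\<bar>x\<bar> / norm (a n) \<le> \<bar>x\<bar> / (c * real (Suc n) powr (1 / \<rho>))"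
        using c im[of n] by (intro divide_left_mono mult_pos_pos) auto
      also have "\<dots> = y n" by (simp add: y_def Y_def powr_minus_divide)
      finally show ?thesis unfolding K_def by (rule norm_ln_factor_ratio_of_real_le[OF im])
    qed
    hence "norm (\<Sum>n. ln_factor_ratio p (a n) (complex_of_real x)) \<le> (\<Sum>n. K * min (y n ^ p) (y n ^ Suc p))"
      by (intro norm_suminf_le summable_mult summable)
    also have "\<dots> = K * (\<Sum>n. min (y n ^ p) (y n ^ Suc p))"
      by (rule suminf_mult [OF summable])
    also have "\<dots> \<le> K * (S * Y powr \<rho>)"
      unfolding y_def S_def using K by (intro mult_left_mono suminf_min_powers_le(2)[OF \<rho> Y])
    also have "\<dots> = K * S / c powr \<rho> * \<bar>x\<bar> powr \<rho>"
      using c by (simp add: Y_def powr_divide)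
    finally show ?thesis .
  qed
  thus ?thesis using that by blast
qed

lemma of_int_floor_less_of_notin_Ints:
  fixes x :: "'a::floor_ceiling"
  shows "x \<notin> \<int> \<Longrightarrow> of_int \<lfloor>x\<rfloor> < x"
  using frac_gt_0_iff[of x] unfolding frac_def by simp

theorem lemma2p3:
  fixes a :: "nat \<Rightarrow> complex" and C0 \<rho> :: real and f :: "complex \<Rightarrow> complex"
  assumes upper: "\<And>j. Im (a j) > 0"
    and mono: "\<And>j. norm (a j) \<le> norm (a (Suc j))"
    and count: "\<And>r. r \<ge> 1 \<Longrightarrow>
                  finite {j. norm (a j) \<le> r} \<and> real (card {j. norm (a j) \<le> r}) \<le> C0 * r powr \<rho>"
    and rho_pos: "\<rho> > 0"
    and rho_nonint: "\<rho> \<notin> \<int>"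
    and f_def: "f = (\<lambda>z. \<Prod>n. weierstrass_factor (nat \<lfloor>\<rho>\<rfloor>) (z / cnj (a n))
                               / weierstrass_factor (nat \<lfloor>\<rho>\<rfloor>) (z / a n))"
  shows "(\<lambda>x::real. norm (oint0 (\<lambda>t. deriv f (complex_of_real t) / f (complex_of_real t)) x))
           \<in> O[at_infinity](\<lambda>x. \<bar>x\<bar> powr \<rho>)"
proof -
  define p where "p = nat \<lfloor>\<rho>\<rfloor>"
  have "of_int \<lfloor>\<rho>\<rfloor> < \<rho>"
    using rho_nonint by (rule of_int_floor_less_of_notin_Ints)
  moreover have "real p = of_int \<lfloor>\<rho>\<rfloor>" using rho_pos by (simp add: p_def)
  ultimately have \<rho>: "real p < \<rho>" "\<rho> < real p + 1" by linarith+
  have im: "Im (a n) \<noteq> 0" for n using upper[of n] by simp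
  have "a 0 \<noteq> 0" using im[of 0] by auto
  then obtain c where c: "0 < c" "\<And>n. c * real (Suc n) powr (1 / \<rho>) \<le> norm (a n)"
    using norm_ge_of_counting_bound[OF mono count rho_pos] by blast
  have "summable (\<lambda>n. inverse (norm (a n)) ^ Suc p)"
    using \<rho> by (intro summable_inverse_norm_power[OF c rho_pos]) simp
  note log_integral = oint0_logarithmic_derivative_eq_suminf[OF im this f_def [folded p_def]]
  obtain B where B: "\<And>x. c \<le> \<bar>x\<bar> \<Longrightarrow>
      norm (\<Sum>n. ln_factor_ratio p (a n) (complex_of_real x)) \<le> B * \<bar>x\<bar> powr \<rho>"
    using norm_suminf_ln_factor_ratio_le[OF im c rho_pos \<rho>] by blast
  show ?thesis
  proof (rule bigoI[where c = B])
    show "\<forall>\<^sub>F x in at_infinity. norm (norm (oint0 (\<lambda>t. deriv f (complex_of_real t) / f (complex_of_real t)) x))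
                                   \<le> B * norm (\<bar>x\<bar> powr \<rho>)"
      unfolding eventually_at_infinity by (intro exI[of _ c] allI impI) (simp add: log_integral B)
  qed
qed

end
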